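(* Let $n,m\geq 1$, let $(T_1,\dots,T_n)\in\mathscr H_m(n)$ and let $H_n=\Phi(T_1,\dots,T_n)$ be the corresponding $(2m+1)$-historic tree. Then: (i) the number of external vertices of $H_n$ equals the number of leaves of $T_n$; (ii) the number of branchings of $H_n$ equals the number of keys of $T_n$ that are not stored in leaves; (iii) if $n\geq 2m+1$, then for every $i$, letting $v$ be the $i$-th external vertex of $H_n$ from the left and $s$ the number of internal vertices of $H_n$ strictly between $v$ and the closest branching above $v$ (the nearest branching on the path from $v$ to the root), the $i$-th leaf of $T_n$ from the left contains exactly $m+s$ keys.
   Context: Fix an integer $m\geq 1$. A $B$-tree of order $2m+1$ is a rooted plane tree whose nodes contain pairwise distinct real keys such that: keys are stored in increasing order from left to right; a non-leaf node with $k$ keys has exactly $k+1$ children, the $i$-th child being attached between the $(i-1)$-th and $i$-th key of the node, with all keys in the subtree of that child lying between those two keys; every node contains between $m$ and $2m$ keys, except the root, which contains between $1$ and $2m$ keys; and all leaves have the same distance to the root. Insertion algorithm: a new key is placed in the appropriate leaf at the appropriate position; if that leaf now has $2m+1$ keys, it is split: its median key moves up into the parent node, and the $m$ smallest and the $m$ largest keys form two new nodes, which become children of the parent on either side of the moved key; this is repeated at the parent if it now has $2m+1$ keys; if the root gets $2m+1$ keys, a new root containing only its median is created above it, with the two halves as children. $B$-trees are considered up to isomorphism of rooted plane trees; leaves are numbered from left to right. A history $(T_1,\dots,T_n)$ is a sequence of $B$-trees of order $2m+1$ with $T_1$ the single node with one key and $T_i$ obtained from $T_{i-1}$ by inserting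 one key; $\mathscr H_m(n)$ is the set of all histories of length $n$. A $(2m+1)$-historic tree on $n$ vertices is a rooted plane tree with vertices labelled bijectively by $\{1,\dots,n\}$, labels increasing along every root-to-leaf path, such that (root at height $0$) vertices at heights $2m+j(m+1)$, $j\geq0$, called branchings, have two ordered child slots (left, right), each possibly occupied, and all other vertices have a single child slot. Tree vertices are internal; unoccupied slots are external vertices, ordered left to right. The map $\Phi$: $\Phi(T_1)$ is the one-vertex tree; if $\Phi(T_1,\dots,T_k)=H_k$ and $T_{k+1}$ arises from $T_k$ by inserting a key into the $i$-th leaf of $T_k$ (before splits), then $\Phi(T_1,\dots,T_{k+1})$ is obtained from $H_k$ by placing a vertex labelled $k+1$ at the $i$-th external vertex of $H_k$. *)

theory Defs
  imports Complex_Main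
begin

text \<open>A node stores its keys (increasing) and its list of children
  (empty list = leaf).\<close>
datatype btree = Node "real list" "btree list"

fun keys :: "btree \<Rightarrow> real set" where
  "keys (Node ks ts) = set ks \<union> \<Union> (set (map keys ts))"

text \<open>Result of inserting into a subtree: either a tree, or a split
  (left half, median key moving up, right half).\<close>
datatype up = Up btree | Split btree real btree

text \<open>Position (0-based) of the child to descend into / of the key among ks.\<close>
definition pos :: "real \<Rightarrow> real list \<Rightarrow> nat" where
  "pos x ks = length (filter (\<lambda>k. k < x) ks)"

definition leafins :: "nat \<Rightarrow> real \<Rightarrow> real list \<Rightarrow> up" where
  "leafins m x ks =
     (let i = pos x ks; ks' = take i ks @ x # drop i ks in
      if length ks' = 2*m+1
      then Split (Node (take m ks') []) (ks' ! m) (Node (drop (m+1) ks') [])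
      else Up (Node ks' []))"

definition nodefix :: "nat \<Rightarrow> real list \<Rightarrow> btree list \<Rightarrow> nat \<Rightarrow> up \<Rightarrow> up" where
  "nodefix m ks ts i r =
     (case r of
        Up t \<Rightarrow> Up (Node ks (ts[i := t]))
      | Split l y rt \<Rightarrow>
          (let ks' = take i ks @ y # drop i ks;
               ts' = take i ts @ l # rt # drop (Suc i) ts in
           if length ks' = 2*m+1
           then Split (Node (take m ks') (take (m+1) ts')) (ks' ! m)
                      (Node (drop (m+1) ks') (drop (m+1) ts'))
           else Up (Node ks' ts')))"

text \<open>ins m x t inserts x into t; insl m x i ts inserts x into the i-th tree of ts
  (the second case of insl is never reached for well-formed B-trees).\<close>
fun ins :: "nat \<Rightarrow> real \<Rightarrow> btree \<Rightarrow> up"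
and insl :: "nat \<Rightarrow> real \<Rightarrow> nat \<Rightarrow> btree list \<Rightarrow> up" where
  "ins m x (Node ks ts) =
     (if ts = [] then leafins m x ks
      else nodefix m ks ts (pos x ks) (insl m x (pos x ks) ts))"
| "insl m x i [] = Up (Node [] [])"
| "insl m x 0 (t # ts) = ins m x t"
| "insl m x (Suc i) (t # ts) = insl m x i ts"

definition binsert :: "nat \<Rightarrow> real \<Rightarrow> btree \<Rightarrow> btree" where
  "binsert m x t = (case ins m x t of Up t' \<Rightarrow> t' | Split l y r \<Rightarrow> Node [y] [l, r])"

fun leaves :: "btree \<Rightarrow> real list list" where
  "leaves (Node ks ts) = (if ts = [] then [ks] else concat (map leaves ts))"

fun ikeys :: "btree \<Rightarrow> nat" where
  "ikeys (Node ks ts) = (if ts = [] then 0 else length ks + sum_list (map ikeys ts))"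

text \<open>Index (0-based, from the left) of the leaf into which key x is placed.\<close>
fun target :: "real \<Rightarrow> btree \<Rightarrow> nat"
and targetl :: "real \<Rightarrow> nat \<Rightarrow> btree list \<Rightarrow> nat" where
  "target x (Node ks ts) = (if ts = [] then 0 else targetl x (pos x ks) ts)"
| "targetl x i [] = 0"
| "targetl x 0 (t # ts) = target x t"
| "targetl x (Suc i) (t # ts) = length (leaves t) + targetl x i ts"

definition histories :: "nat \<Rightarrow> nat \<Rightarrow> btree list set" where
  "histories m n = {Ts. length Ts = n \<and> n \<ge> 1 \<and> (\<exists>x. Ts ! 0 = Node [x] []) \<and>
     (\<forall>k. Suc k < n \<longrightarrow>
        (\<exists>x. x \<notin> keys (Ts ! k) \<and> Ts ! Suc k = binsert m x (Ts ! k)))}"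

definition newkey :: "btree \<Rightarrow> btree \<Rightarrow> real" where
  "newkey T T' = (THE x. x \<in> keys T' - keys T)"

text \<open>E = unoccupied slot (external vertex); V lab slots = internal vertex
  with label lab and its ordered child slots.\<close>
datatype htree = E | V nat "htree list"

definition isbranch :: "nat \<Rightarrow> nat \<Rightarrow> bool" where
  "isbranch m h = (\<exists>j. h = 2*m + j*(m+1))"

definition newv :: "nat \<Rightarrow> nat \<Rightarrow> nat \<Rightarrow> htree" where
  "newv m h lab = V lab (if isbranch m h then [E, E] else [E])"

fun ext :: "htree \<Rightarrow> nat" where
  "ext E = 1"
| "ext (V l ts) = sum_list (map ext ts)"

fun nbranch :: "nat \<Rightarrow> nat \<Rightarrow> htree \<Rightarrow> nat" where
  "nbranch m h E = 0"
| "nbranch m h (V l ts) = (if isbranch m h then 1 else 0) + sum_list (map (nbranch m (Suc h)) ts)"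

text \<open>Place a new vertex labelled lab at the i-th (0-based) external vertex.\<close>
fun place :: "nat \<Rightarrow> nat \<Rightarrow> nat \<Rightarrow> nat \<Rightarrow> htree \<Rightarrow> htree"
and place_list :: "nat \<Rightarrow> nat \<Rightarrow> nat \<Rightarrow> nat \<Rightarrow> htree list \<Rightarrow> htree list" where
  "place m h i lab E = (if i = 0 then newv m h lab else E)"
| "place m h i lab (V l ts) = V l (place_list m (Suc h) i lab ts)"
| "place_list m h i lab [] = []"
| "place_list m h i lab (t # ts) =
     (if i < ext t then place m h i lab t # ts
      else t # place_list m h (i - ext t) lab ts)"

text \<open>Heights of the internal ancestors (root first) of the i-th external vertex.\<close>
fun anc :: "nat \<Rightarrow> nat \<Rightarrow> htree \<Rightarrow> nat list"
and anc_list :: "nat \<Rightarrow> nat \<Rightarrow> htree list \<Rightarrow> nat list" where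
  "anc h i E = []"
| "anc h i (V l ts) = h # anc_list (Suc h) i ts"
| "anc_list h i [] = []"
| "anc_list h i (t # ts) = (if i < ext t then anc h i t else anc_list h (i - ext t) ts)"

definition sbetween :: "nat \<Rightarrow> nat \<Rightarrow> htree \<Rightarrow> nat" where
  "sbetween m i H = length (takeWhile (\<lambda>h. \<not> isbranch m h) (rev (anc 0 i H)))"

text \<open>The map Phi: PhiN m Ts k = Phi(T_1,...,T_(k+1)).\<close>
fun PhiN :: "nat \<Rightarrow> btree list \<Rightarrow> nat \<Rightarrow> htree" where
  "PhiN m Ts 0 = newv m 0 1"
| "PhiN m Ts (Suc k) =
     place m 0 (target (newkey (Ts ! k) (Ts ! Suc k)) (Ts ! k)) (k + 2) (PhiN m Ts k)"

definition Phi :: "nat \<Rightarrow> btree list \<Rightarrow> htree" where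
  "Phi m Ts = PhiN m Ts (length Ts - 1)"

end

theory Submission
  imports Defs
begin

(* Follow the path from the root of H_n down to an external vertex.  Each non-branching vertex
   on it records an insertion into the corresponding leaf of T_n, which gains a key; a branching
   records an insertion into a full leaf (2m keys), which splits into two leaves of m keys, one
   for each child slot.  So the i-th leaf has leaf_size m d keys, d being the depth of the i-th
   external vertex, and after height 2m this is m plus the number of vertices since the last
   branching.  A leaf split moves exactly one key up into the internal nodes (the splits it
   triggers higher up only rearrange internal keys), which matches the new branching. *)

section \<open>Leaf sizes along a path\<close>

lemma isbranch_iff: "isbranch m d \<longleftrightarrow> 2*m \<le> d \<and> (d - 2*m) mod (m+1) = 0"
proof
  assume "isbranch m d"
  then obtain j where "d = 2*m + j*(m+1)" by (auto simp: isbranch_def)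
  then have "2*m \<le> d" "d - 2*m = j*(m+1)" by simp_all
  then show "2*m \<le> d \<and> (d - 2*m) mod (m+1) = 0"
    by (simp only: mod_mult_self1_is_0 mod_mult_self2_is_0 simp_thms)
next
  assume "2*m \<le> d \<and> (d - 2*m) mod (m+1) = 0"
  then have "d = 2*m + (d - 2*m) div (m+1) * (m+1)"
    by (metis add_diff_inverse_nat div_mult_mod_eq add_0_right not_le)
  then show "isbranch m d" unfolding isbranch_def by blast
qed

lemma isbranch_above_iff:
  assumes "2*m < d"
  shows "isbranch m d \<longleftrightarrow> (d - Suc (2*m)) mod (m+1) = m"
proof -
  have "d - 2*m = Suc (d - Suc (2*m))" using assms by simp
  then show ?thesis using assms by (simp add: isbranch_iff mod_Suc)
qed

fun leaf_size :: "nat \<Rightarrow> nat \<Rightarrow> nat" where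
  "leaf_size m 0 = 0"
| "leaf_size m (Suc d) = (if isbranch m d then m else Suc (leaf_size m d))"

lemma leaf_size_closed_form:
  assumes "m \<ge> 1"
  shows "leaf_size m d = (if d \<le> 2*m then d else m + (d - Suc (2*m)) mod (m+1))"
proof (induction d)
  case 0
  show ?case by simp
next
  case (Suc d)
  consider "d < 2*m" | "d = 2*m" | "2*m < d" by linarith
  then show ?case
  proof cases
    case 1
    then show ?thesis using Suc by (simp add: isbranch_iff)
  next
    case 2
    then show ?thesis by (simp add: isbranch_iff)
  next
    case 3
    have "Suc d - Suc (2*m) = Suc (d - Suc (2*m))" using 3 by simp
    then show ?thesis using Suc 3 isbranch_above_iff[OF 3] by (simp add: mod_Suc)
  qed
qed

lemma leaf_size_eq_iff_isbranch:
  assumes "m \<ge> 1"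
  shows "leaf_size m d = 2*m \<longleftrightarrow> isbranch m d"
proof (cases "d \<le> 2*m")
  case True
  then show ?thesis using assms by (auto simp: leaf_size_closed_form isbranch_iff)
next
  case False
  then show ?thesis using assms isbranch_above_iff[of m d] by (simp add: leaf_size_closed_form)
qed

definition branch_gap :: "nat \<Rightarrow> nat \<Rightarrow> nat" where
  "branch_gap m d = length (takeWhile (\<lambda>h. \<not> isbranch m h) (rev [0..<d]))"

lemma branch_gap_Suc: "branch_gap m (Suc d) = (if isbranch m d then 0 else Suc (branch_gap m d))"
  by (simp add: branch_gap_def)

lemma leaf_size_above_first_branching:
  "2*m < d \<Longrightarrow> leaf_size m d = m + branch_gap m d"
proof (induction d)
  case 0
  then show ?case by simp
next
  case (Suc d)
  then show ?case
    by (cases "d = 2*m") (auto simp: branch_gap_Suc isbranch_iff)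
qed

section \<open>Depths of external vertices\<close>

fun ext_depths :: "htree \<Rightarrow> nat list" where
  "ext_depths E = [0]"
| "ext_depths (V l ts) = map Suc (concat (map ext_depths ts))"

lemma length_ext_depths [simp]: "length (ext_depths H) = ext H"
  by (induction H) (simp_all add: length_concat comp_def cong: map_cong)

lemma length_concat_ext_depths [simp]: "length (concat (map ext_depths ts)) = sum_list (map ext ts)"
  by (induction ts) simp_all

definition child_depths :: "nat \<Rightarrow> nat \<Rightarrow> nat \<Rightarrow> nat list" where
  "child_depths m h d = (if isbranch m h then [Suc d, Suc d] else [Suc d])"

lemma ext_depths_place:
  "i < ext H \<Longrightarrow> ext_depths (place m h i lab H) =
     (let D = ext_depths H in take i D @ child_depths m (h + D!i) (D!i) @ drop (Suc i) D)"
  "i < sum_list (map ext ts) \<Longrightarrow> concat (map ext_depths (place_list m h i lab ts)) =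
     (let D = concat (map ext_depths ts) in take i D @ child_depths m (h + D!i) (D!i) @ drop (Suc i) D)"
proof (induction m h i lab H and m h i lab ts rule: place_place_list.induct)
  case (4 m h i lab t ts)
  then show ?case
    by (cases "i < ext t") (auto simp: nth_append Suc_diff_le Let_def)
qed (auto simp: child_depths_def newv_def drop_map take_map Let_def)

lemma nbranch_place:
  "i < ext H \<Longrightarrow> nbranch m h (place m h i lab H) =
     nbranch m h H + (if isbranch m (h + ext_depths H ! i) then 1 else 0)"
  "i < sum_list (map ext ts) \<Longrightarrow> sum_list (map (nbranch m h) (place_list m h i lab ts)) =
     sum_list (map (nbranch m h) ts) + (if isbranch m (h + concat (map ext_depths ts) ! i) then 1 else 0)"
proof (induction m h i lab H and m h i lab ts rule: place_place_list.induct)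
  case (4 m h i lab t ts)
  then show ?case
    by (cases "i < ext t") (auto simp: nth_append)
qed (auto simp: newv_def)

lemma anc_eq_upt:
  "i < ext H \<Longrightarrow> anc h i H = [h..<h + ext_depths H ! i]"
  "i < sum_list (map ext ts) \<Longrightarrow> anc_list h i ts = [h..<h + concat (map ext_depths ts) ! i]"
proof (induction h i H and h i ts rule: anc_anc_list.induct)
  case (2 h i l ts)
  then show ?case by (simp add: upt_conv_Cons)
next
  case (4 h i t ts)
  then show ?case by (auto simp: nth_append)
qed auto

lemma sbetween_eq_branch_gap:
  "i < ext H \<Longrightarrow> sbetween m i H = branch_gap m (ext_depths H ! i)"
  by (simp add: sbetween_def branch_gap_def anc_eq_upt)

section \<open>Insertion into B-trees\<close>

lemma concat_map_update:
  "i < length xs \<Longrightarrow>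
     concat (map f (xs[i := x])) = concat (map f (take i xs)) @ f x @ concat (map f (drop (Suc i) xs))"
  by (simp add: upd_conv_take_nth_drop)

lemma sum_list_map_update:
  "i < length xs \<Longrightarrow>
     sum_list (map f (xs[i := x])) = sum_list (map f (take i xs)) + f x + sum_list (map f (drop (Suc i) xs))"
  by (simp add: upd_conv_take_nth_drop add.assoc)

lemma concat_map_split_nth:
  "i < length xs \<Longrightarrow>
     concat (map f xs) = concat (map f (take i xs)) @ f (xs ! i) @ concat (map f (drop (Suc i) xs))"
  using concat_map_update[of i xs f "xs ! i"] by simp

lemma set_split_nth: "i < length xs \<Longrightarrow> set xs = set (take i xs) \<union> {xs ! i} \<union> set (drop (Suc i) xs)"
proof -
  assume "i < length xs"
  then have "set xs = set (take i xs @ xs ! i # drop (Suc i) xs)"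
    by (simp flip: id_take_nth_drop)
  then show ?thesis by auto
qed

fun wf_btree :: "nat \<Rightarrow> btree \<Rightarrow> bool" where
  "wf_btree m (Node ks ts) \<longleftrightarrow> length ks \<le> 2*m \<and> (ts \<noteq> [] \<longrightarrow> length ts = Suc (length ks))
     \<and> (\<forall>t \<in> set ts. wf_btree m t)"

fun up_tree :: "up \<Rightarrow> btree" where
  "up_tree (Up t) = t"
| "up_tree (Split l y r) = Node [y] [l, r]"

lemma binsert_eq_up_tree: "binsert m x t = up_tree (ins m x t)"
  by (cases "ins m x t") (simp_all add: binsert_def)

definition split_full :: "nat \<Rightarrow> real list \<Rightarrow> btree list \<Rightarrow> up" where
  "split_full m ks ts =
     (if length ks = 2*m+1
      then Split (Node (take m ks) (take (m+1) ts)) (ks ! m) (Node (drop (m+1) ks) (drop (m+1) ts))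
      else Up (Node ks ts))"

lemma leafins_eq_split_full:
  "leafins m x ks = split_full m (take (pos x ks) ks @ x # drop (pos x ks) ks) []"
  by (simp add: leafins_def split_full_def Let_def)

lemma nodefix_Split:
  "nodefix m ks ts i (Split l y r) =
     split_full m (take i ks @ y # drop i ks) (take i ts @ l # r # drop (Suc i) ts)"
  by (simp add: nodefix_def split_full_def Let_def)

lemma keys_split_full: "keys (up_tree (split_full m ks ts)) = keys (Node ks ts)"
proof -
  have "set ks = set (take m ks) \<union> {ks ! m} \<union> set (drop (m+1) ks)" if "m < length ks"
    using set_split_nth[OF that] by simp
  moreover have "set ts = set (take (m+1) ts) \<union> set (drop (m+1) ts)"
    by (metis append_take_drop_id set_append)
  ultimately show ?thesis by (auto simp: split_full_def)
qed

lemma leaves_split_full: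
  assumes "ts \<noteq> []" "length ts = Suc (length ks)"
  shows "leaves (up_tree (split_full m ks ts)) = leaves (Node ks ts)"
proof -
  have "concat (map leaves (take (m+1) ts)) @ concat (map leaves (drop (m+1) ts)) = concat (map leaves ts)"
    by (metis append_take_drop_id concat_append map_append)
  then show ?thesis using assms by (auto simp: split_full_def)
qed

lemma ikeys_split_full:
  assumes "ts \<noteq> []" "length ts = Suc (length ks)"
  shows "ikeys (up_tree (split_full m ks ts)) = ikeys (Node ks ts)"
proof -
  have "sum_list (map ikeys (take (m+1) ts)) + sum_list (map ikeys (drop (m+1) ts)) = sum_list (map ikeys ts)"
    by (metis append_take_drop_id sum_list_append map_append)
  then show ?thesis using assms by (auto simp: split_full_def)
qed

lemma wf_split_full:
  assumes "m \<ge> 1" "length ks \<le> 2*m+1" "ts \<noteq> [] \<longrightarrow> length ts = Suc (length ks)"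
    "\<forall>t \<in> set ts. wf_btree m t"
  shows "wf_btree m (up_tree (split_full m ks ts))"
  using assms by (auto simp: split_full_def dest: in_set_takeD in_set_dropD)

lemma leaves_nodefix:
  assumes "i < length ts" "length ts = Suc (length ks)"
  shows "leaves (up_tree (nodefix m ks ts i u)) = leaves (Node ks (ts[i := up_tree u]))"
proof (cases u)
  case (Up t)
  then show ?thesis by (simp add: nodefix_def)
next
  case (Split l y r)
  have "ts \<noteq> []" "take i ts @ l # r # drop (Suc i) ts \<noteq> []" using assms by auto
  then show ?thesis using Split assms
    by (simp add: nodefix_Split leaves_split_full concat_map_update)
qed

lemma ikeys_nodefix:
  assumes "i < length ts" "length ts = Suc (length ks)"
  shows "ikeys (up_tree (nodefix m ks ts i u)) = ikeys (Node ks (ts[i := up_tree u]))"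
proof (cases u)
  case (Up t)
  then show ?thesis by (simp add: nodefix_def)
next
  case (Split l y r)
  have "ts \<noteq> []" "take i ts @ l # r # drop (Suc i) ts \<noteq> []" using assms by auto
  then show ?thesis using Split assms
    by (simp add: nodefix_Split ikeys_split_full sum_list_map_update)
qed

lemma keys_nodefix:
  assumes "i < length ts" "length ts = Suc (length ks)"
  shows "keys (up_tree (nodefix m ks ts i u)) = keys (Node ks (ts[i := up_tree u]))"
proof (cases u)
  case (Up t)
  then show ?thesis by (simp add: nodefix_def)
next
  case (Split l y r)
  have "set ks = set (take i ks) \<union> set (drop i ks)"
    by (metis append_take_drop_id set_append)
  then show ?thesis using Split assms
    by (auto simp: nodefix_Split keys_split_full upd_conv_take_nth_drop)
qed

lemma wf_nodefix:
  assumes "m \<ge> 1" "wf_btree m (Node ks ts)" "ts \<noteq> []" "i < length ts" "wf_btree m (up_tree u)"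
  shows "wf_btree m (up_tree (nodefix m ks ts i u))"
proof (cases u)
  case (Up t)
  then show ?thesis using assms by (auto simp: nodefix_def dest: set_update_subset_insert[THEN subsetD])
next
  case (Split l y r)
  have "wf_btree m (up_tree (split_full m (take i ks @ y # drop i ks) (take i ts @ l # r # drop (Suc i) ts)))"
    using Split assms by (intro wf_split_full) (auto dest: in_set_takeD in_set_dropD)
  then show ?thesis using Split by (simp add: nodefix_Split)
qed

lemma pos_le_length: "pos x ks \<le> length ks"
  by (simp add: pos_def)

lemma insl_nth: "i < length ts \<Longrightarrow> insl m x i ts = ins m x (ts ! i)"
  by (induction ts arbitrary: i) (auto simp: less_Suc_eq_0_disj)

lemma targetl_nth:
  "i < length ts \<Longrightarrow> targetl x i ts = length (concat (map leaves (take i ts))) + target x (ts ! i)"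
  by (induction ts arbitrary: i) (auto simp: less_Suc_eq_0_disj)

lemma ins_internal_node:
  assumes "wf_btree m (Node ks ts)" "ts \<noteq> []"
  obtains i where "i < length ts"
    "ins m x (Node ks ts) = nodefix m ks ts i (ins m x (ts ! i))"
    "target x (Node ks ts) = length (concat (map leaves (take i ts))) + target x (ts ! i)"
proof
  show "pos x ks < length ts" using assms pos_le_length[of x ks] by simp
  then show "ins m x (Node ks ts) = nodefix m ks ts (pos x ks) (ins m x (ts ! pos x ks))"
    "target x (Node ks ts) = length (concat (map leaves (take (pos x ks) ts))) + target x (ts ! pos x ks)"
    using assms by (simp_all add: insl_nth targetl_nth)
qed

lemma target_less_length_leaves: "wf_btree m t \<Longrightarrow> target x t < length (leaves t)"
proof (induction t)
  case (Node ks ts)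
  show ?case
  proof (cases "ts = []")
    case False
    with Node.prems obtain i where i: "i < length ts"
      and "target x (Node ks ts) = length (concat (map leaves (take i ts))) + target x (ts ! i)"
      by (rule ins_internal_node)
    moreover have "target x (ts ! i) < length (leaves (ts ! i))"
      using Node i by simp
    ultimately show ?thesis using False concat_map_split_nth[OF i, of leaves] by simp
  qed simp
qed

lemma wf_ins: "m \<ge> 1 \<Longrightarrow> wf_btree m t \<Longrightarrow> wf_btree m (up_tree (ins m x t))"
proof (induction t)
  case (Node ks ts)
  show ?case
  proof (cases "ts = []")
    case True
    then show ?thesis using Node.prems
      by (simp add: leafins_eq_split_full wf_split_full pos_def)
  next
    case False
    with Node.prems(2) obtain i where i: "i < length ts"
      and "ins m x (Node ks ts) = nodefix m ks ts i (ins m x (ts ! i))"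
      by (rule ins_internal_node)
    moreover have "wf_btree m (up_tree (ins m x (ts ! i)))" using Node i by simp
    ultimately show ?thesis using Node.prems False by (simp add: wf_nodefix)
  qed
qed

lemma keys_ins: "wf_btree m t \<Longrightarrow> keys (up_tree (ins m x t)) = insert x (keys t)"
proof (induction t)
  case (Node ks ts)
  show ?case
  proof (cases "ts = []")
    case True
    have "set ks = set (take (pos x ks) ks) \<union> set (drop (pos x ks) ks)"
      by (metis append_take_drop_id set_append)
    then show ?thesis using True by (auto simp: leafins_eq_split_full keys_split_full)
  next
    case False
    with Node.prems obtain i where i: "i < length ts"
      and "ins m x (Node ks ts) = nodefix m ks ts i (ins m x (ts ! i))"
      by (rule ins_internal_node)
    moreover have "keys (up_tree (ins m x (ts ! i))) = insert x (keys (ts ! i))" using Node i by simp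
    moreover note set_split_nth[OF i]
    ultimately show ?thesis using Node.prems i
      by (auto simp: keys_nodefix upd_conv_take_nth_drop)
  qed
qed

definition insert_leaf_sizes :: "nat \<Rightarrow> nat list \<Rightarrow> nat \<Rightarrow> nat list" where
  "insert_leaf_sizes m ls j =
     (if ls ! j = 2*m then take j ls @ [m, m] @ drop (Suc j) ls else ls[j := Suc (ls ! j)])"

lemma insert_leaf_sizes_append:
  "j < length ls \<Longrightarrow> insert_leaf_sizes m (ps @ ls @ qs) (length ps + j) = ps @ insert_leaf_sizes m ls j @ qs"
  by (auto simp: insert_leaf_sizes_def nth_append list_update_append)

lemma leaf_sizes_ins:
  "wf_btree m t \<Longrightarrow>
     map length (leaves (up_tree (ins m x t))) = insert_leaf_sizes m (map length (leaves t)) (target x t)"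
proof (induction t)
  case (Node ks ts)
  show ?case
  proof (cases "ts = []")
    case True
    then show ?thesis using Node.prems pos_le_length[of x ks]
      by (auto simp: leafins_eq_split_full split_full_def insert_leaf_sizes_def)
  next
    case False
    with Node.prems obtain i where i: "i < length ts"
      and ins: "ins m x (Node ks ts) = nodefix m ks ts i (ins m x (ts ! i))"
      and target: "target x (Node ks ts) = length (concat (map leaves (take i ts))) + target x (ts ! i)"
      by (rule ins_internal_node)
    have wf: "wf_btree m (ts ! i)" using Node.prems i by simp
    have IH: "map length (leaves (up_tree (ins m x (ts ! i)))) =
        insert_leaf_sizes m (map length (leaves (ts ! i))) (target x (ts ! i))"
      using Node.IH wf i by simp
    have "target x (ts ! i) < length (map length (leaves (ts ! i)))"
      using target_less_length_leaves[OF wf] by simp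
    from insert_leaf_sizes_append[OF this, of m "map length (concat (map leaves (take i ts)))"
        "map length (concat (map leaves (drop (Suc i) ts)))"]
    show ?thesis using Node.prems False i ins target IH
      by (simp add: leaves_nodefix concat_map_update concat_map_split_nth[OF i, of leaves])
  qed
qed

lemma ikeys_ins:
  "wf_btree m t \<Longrightarrow>
     ikeys (up_tree (ins m x t)) = ikeys t + (if length (leaves t ! target x t) = 2*m then 1 else 0)"
proof (induction t)
  case (Node ks ts)
  show ?case
  proof (cases "ts = []")
    case True
    then show ?thesis using pos_le_length[of x ks]
      by (auto simp: leafins_eq_split_full split_full_def)
  next
    case False
    with Node.prems obtain i where i: "i < length ts"
      and ins: "ins m x (Node ks ts) = nodefix m ks ts i (ins m x (ts ! i))"
      and target: "target x (Node ks ts) = length (concat (map leaves (take i ts))) + target x (ts ! i)"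
      by (rule ins_internal_node)
    have wf: "wf_btree m (ts ! i)" using Node.prems i by simp
    have "leaves (Node ks ts) ! target x (Node ks ts) = leaves (ts ! i) ! target x (ts ! i)"
      using False target target_less_length_leaves[OF wf] concat_map_split_nth[OF i, of leaves]
      by (simp add: nth_append)
    moreover have "ikeys (up_tree (ins m x (ts ! i))) =
        ikeys (ts ! i) + (if length (leaves (ts ! i) ! target x (ts ! i)) = 2*m then 1 else 0)"
      using Node.IH wf i by simp
    moreover have "ikeys (Node ks ts) = length ks + sum_list (map ikeys (take i ts)) + ikeys (ts ! i)
        + sum_list (map ikeys (drop (Suc i) ts))"
      using False i sum_list_map_update[OF i, of ikeys "ts ! i"] by simp
    ultimately show ?thesis using Node.prems False i ins
      by (simp add: ikeys_nodefix sum_list_map_update)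
  qed
qed

section \<open>Histories\<close>

lemma insert_leaf_sizes_map_leaf_size:
  assumes "m \<ge> 1" "j < length D"
  shows "insert_leaf_sizes m (map (leaf_size m) D) j =
    map (leaf_size m) (take j D @ child_depths m (D ! j) (D ! j) @ drop (Suc j) D)"
proof (cases "isbranch m (D ! j)")
  case True
  then show ?thesis using assms
    by (simp add: insert_leaf_sizes_def child_depths_def leaf_size_eq_iff_isbranch take_map drop_map)
next
  case False
  then show ?thesis using assms
    by (simp add: insert_leaf_sizes_def child_depths_def leaf_size_eq_iff_isbranch
        map_update upd_conv_take_nth_drop take_map drop_map)
qed

lemma newkey_eq: "x \<notin> keys T \<Longrightarrow> keys T' = insert x (keys T) \<Longrightarrow> newkey T T' = x"
  unfolding newkey_def by (rule the_equality) auto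

locale btree_history =
  fixes m n :: nat and Ts :: "btree list"
  assumes m_pos: "m \<ge> 1" and history: "Ts \<in> histories m n"
begin

lemma history_length: "length Ts = n"
  using history by (simp add: histories_def)

lemma history_start: obtains x where "Ts ! 0 = Node [x] []"
  using history by (auto simp: histories_def)

lemma history_insert:
  assumes "Suc k < n"
  obtains x where "x \<notin> keys (Ts ! k)" "Ts ! Suc k = up_tree (ins m x (Ts ! k))"
  using history assms by (auto simp: histories_def binsert_eq_up_tree)

lemma wf_history: "k < n \<Longrightarrow> wf_btree m (Ts ! k)"
proof (induction k)
  case 0
  obtain x where "Ts ! 0 = Node [x] []" by (rule history_start)
  then show ?case using m_pos by simp
next
  case (Suc k)
  obtain x where "Ts ! Suc k = up_tree (ins m x (Ts ! k))"
    using Suc.prems by (rule history_insert)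
  then show ?case using Suc m_pos by (simp add: wf_ins)
qed

lemma PhiN_Suc:
  assumes "Suc k < n"
  obtains x where "Ts ! Suc k = up_tree (ins m x (Ts ! k))"
    "PhiN m Ts (Suc k) = place m 0 (target x (Ts ! k)) (k + 2) (PhiN m Ts k)"
proof -
  obtain x where x: "x \<notin> keys (Ts ! k)" and step: "Ts ! Suc k = up_tree (ins m x (Ts ! k))"
    using assms by (rule history_insert)
  have "newkey (Ts ! k) (Ts ! Suc k) = x"
    using x step keys_ins[OF wf_history] assms by (intro newkey_eq) auto
  with step show thesis by (intro that) simp_all
qed

lemma leaf_sizes_history:
  "k < n \<Longrightarrow> map length (leaves (Ts ! k)) = map (leaf_size m) (ext_depths (PhiN m Ts k))"
proof (induction k)
  case 0
  obtain x where "Ts ! 0 = Node [x] []" by (rule history_start)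
  moreover have "\<not> isbranch m 0" using m_pos by (simp add: isbranch_iff)
  ultimately show ?case using m_pos by (simp add: newv_def)
next
  case (Suc k)
  obtain x where step: "Ts ! Suc k = up_tree (ins m x (Ts ! k))"
    and Phi: "PhiN m Ts (Suc k) = place m 0 (target x (Ts ! k)) (k + 2) (PhiN m Ts k)"
    using Suc.prems by (rule PhiN_Suc)
  define D where "D = ext_depths (PhiN m Ts k)"
  have wf: "wf_btree m (Ts ! k)" using Suc.prems by (simp add: wf_history)
  have IH: "map length (leaves (Ts ! k)) = map (leaf_size m) D"
    using Suc by (simp add: D_def)
  then have j: "target x (Ts ! k) < length D"
    using target_less_length_leaves[OF wf] by (metis length_map)
  then show ?case
    using step Phi IH leaf_sizes_ins[OF wf] ext_depths_place(1)[of _ "PhiN m Ts k"]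
      insert_leaf_sizes_map_leaf_size[OF m_pos j]
    by (simp add: D_def Let_def)
qed

lemma length_leaves_history: "k < n \<Longrightarrow> length (leaves (Ts ! k)) = ext (PhiN m Ts k)"
  using arg_cong[OF leaf_sizes_history, of k length] by simp

lemma leaf_size_history:
  assumes "k < n" "i < ext (PhiN m Ts k)"
  shows "length (leaves (Ts ! k) ! i) = leaf_size m (ext_depths (PhiN m Ts k) ! i)"
proof -
  have "length (leaves (Ts ! k) ! i) = map length (leaves (Ts ! k)) ! i"
    using assms length_leaves_history by simp
  also have "\<dots> = leaf_size m (ext_depths (PhiN m Ts k) ! i)"
    using assms by (simp add: leaf_sizes_history)
  finally show ?thesis .
qed

lemma history_step:
  assumes "Suc k < n"
  obtains x where "Ts ! Suc k = up_tree (ins m x (Ts ! k))" "target x (Ts ! k) < ext (PhiN m Ts k)"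
    "PhiN m Ts (Suc k) = place m 0 (target x (Ts ! k)) (k + 2) (PhiN m Ts k)"
proof -
  obtain x where "Ts ! Suc k = up_tree (ins m x (Ts ! k))"
    and "PhiN m Ts (Suc k) = place m 0 (target x (Ts ! k)) (k + 2) (PhiN m Ts k)"
    using assms by (rule PhiN_Suc)
  moreover have "target x (Ts ! k) < ext (PhiN m Ts k)"
    using assms target_less_length_leaves[OF wf_history] length_leaves_history by simp
  ultimately show thesis using that by blast
qed

lemma nbranch_history: "k < n \<Longrightarrow> nbranch m 0 (PhiN m Ts k) = ikeys (Ts ! k)"
proof (induction k)
  case 0
  obtain x where "Ts ! 0 = Node [x] []" by (rule history_start)
  moreover have "\<not> isbranch m 0" using m_pos by (simp add: isbranch_iff)
  ultimately show ?case by (simp add: newv_def)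
next
  case (Suc k)
  obtain x where step: "Ts ! Suc k = up_tree (ins m x (Ts ! k))"
    and j: "target x (Ts ! k) < ext (PhiN m Ts k)"
    and Phi: "PhiN m Ts (Suc k) = place m 0 (target x (Ts ! k)) (k + 2) (PhiN m Ts k)"
    using Suc.prems by (rule history_step)
  have wf: "wf_btree m (Ts ! k)" using Suc.prems by (simp add: wf_history)
  have "length (leaves (Ts ! k) ! target x (Ts ! k)) =
      leaf_size m (ext_depths (PhiN m Ts k) ! target x (Ts ! k))"
    using Suc.prems j by (simp add: leaf_size_history)
  then show ?case
    using step Phi Suc ikeys_ins[OF wf] nbranch_place(1)[OF j] leaf_size_eq_iff_isbranch[OF m_pos]
    by simp
qed

lemma ext_depths_history:
  "k < n \<Longrightarrow> (k < 2*m \<longrightarrow> ext_depths (PhiN m Ts k) = [Suc k])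
    \<and> (2*m \<le> k \<longrightarrow> (\<forall>d \<in> set (ext_depths (PhiN m Ts k)). 2*m < d))"
proof (induction k)
  case 0
  have "\<not> isbranch m 0" using m_pos by (simp add: isbranch_iff)
  then show ?case using m_pos by (simp add: newv_def)
next
  case (Suc k)
  obtain x where j: "target x (Ts ! k) < ext (PhiN m Ts k)"
    and "PhiN m Ts (Suc k) = place m 0 (target x (Ts ! k)) (k + 2) (PhiN m Ts k)"
    using Suc.prems by (rule history_step)
  then have D': "ext_depths (PhiN m Ts (Suc k)) =
       (let D = ext_depths (PhiN m Ts k); j = target x (Ts ! k) in
        take j D @ child_depths m (D ! j) (D ! j) @ drop (Suc j) D)"
    by (simp add: ext_depths_place Let_def)
  show ?case
  proof (cases "k < 2*m")
    case True
    then have "target x (Ts ! k) = 0"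
      using Suc j length_ext_depths[of "PhiN m Ts k"] by simp
    moreover have "isbranch m (Suc k) \<longleftrightarrow> Suc k = 2*m" using True by (auto simp: isbranch_iff)
    ultimately show ?thesis using True Suc D' by (auto simp: child_depths_def)
  next
    case False
    then have "\<forall>d \<in> set (ext_depths (PhiN m Ts k)). 2*m < d" using Suc by simp
    moreover have "ext_depths (PhiN m Ts k) ! target x (Ts ! k) \<in> set (ext_depths (PhiN m Ts k))"
      using j by simp
    ultimately show ?thesis using False D'
      by (auto simp: child_depths_def Let_def dest: in_set_takeD in_set_dropD)
  qed
qed

end

theorem proposition1p2:
  fixes m n :: nat and Ts :: "btree list"
  assumes "m \<ge> 1" and "n \<ge> 1" and "Ts \<in> histories m n"
  shows "ext (Phi m Ts) = length (leaves (Ts ! (n - 1)))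
       \<and> nbranch m 0 (Phi m Ts) = ikeys (Ts ! (n - 1))
       \<and> (n \<ge> 2*m+1 \<longrightarrow>
           (\<forall>i < ext (Phi m Ts).
              length (leaves (Ts ! (n - 1)) ! i) = m + sbetween m i (Phi m Ts)))"
proof -
  interpret btree_history m n Ts using assms(1,3) by unfold_locales
  have last: "n - 1 < n" and Phi: "Phi m Ts = PhiN m Ts (n - 1)"
    using assms(2) history_length by (simp_all add: Phi_def)
  show ?thesis
  proof (intro conjI impI allI)
    show "ext (Phi m Ts) = length (leaves (Ts ! (n - 1)))"
      using length_leaves_history[OF last] Phi by simp
    show "nbranch m 0 (Phi m Ts) = ikeys (Ts ! (n - 1))"
      using nbranch_history[OF last] Phi by simp
    fix i assume "n \<ge> 2*m+1" and i: "i < ext (Phi m Ts)"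
    then have deep: "2*m < ext_depths (Phi m Ts) ! i"
      using ext_depths_history[OF last] Phi by auto
    have "length (leaves (Ts ! (n - 1)) ! i) = leaf_size m (ext_depths (Phi m Ts) ! i)"
      using leaf_size_history[OF last] Phi i by simp
    also have "\<dots> = m + branch_gap m (ext_depths (Phi m Ts) ! i)"
      using deep by (rule leaf_size_above_first_branching)
    finally show "length (leaves (Ts ! (n - 1)) ! i) = m + sbetween m i (Phi m Ts)"
      using i by (simp add: sbetween_eq_branch_gap)
  qed
qed

end
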